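(* For each $T$ and each $z\in L_T$, $\mathbb{P}$-almost surely the infimum in the definition of $h_T(z)$ is attained for some finite sequence $y_0,\dots,y_n\in L_T$ with $y_0=z$, $y_n=0$.
   Context: $(\xi(z))_{z\in\mathbb{Z}^d}$ are i.i.d. with $\mathbb{P}(\xi(z)>x)=x^{-\alpha}$ for $x\ge1$, $\alpha>d$. $|\cdot|$ is the $\ell_1$-norm. $q=d/(\alpha-d)$, $a(T)=(T/\log T)^q$, $r(T)=(T/\log T)^{q+1}$, $L_T=\{z\in\mathbb{R}^d:r(T)z\in\mathbb{Z}^d\}$, $\xi_T(z)=\xi(r(T)z)/a(T)$. For $z\in L_T$, \[h_T(z)=\inf\Big\{\sum_{j=1}^n q\frac{|y_{j-1}-y_j|}{\xi_T(y_j)}: n\ge0,\ y_0,\dots,y_n\in L_T,\ y_0=z,\ y_n=0\Big\}.\] *)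

theory Defs
  imports "HOL-Probability.Probability"
begin

text \<open>Lattice Z^d is int^'d, R^d is real^'d, d = CARD('d).\<close>

definition l1norm :: "real^'d \<Rightarrow> real" where
  "l1norm x = (\<Sum>i\<in>UNIV. \<bar>x $ i\<bar>)"

definition qexp :: "real \<Rightarrow> 'd::finite itself \<Rightarrow> real" where
  "qexp \<alpha> _ = real CARD('d) / (\<alpha> - real CARD('d))"

definition aT :: "real \<Rightarrow> real \<Rightarrow> real" where
  "aT q T = (T / ln T) powr q"

definition rT :: "real \<Rightarrow> real \<Rightarrow> real" where
  "rT q T = (T / ln T) powr (q + 1)"

definition LT :: "real \<Rightarrow> (real^'d) set" where
  "LT r = {z. \<forall>i. r * z $ i \<in> \<int>}"

definition to_lattice :: "real \<Rightarrow> real^'d \<Rightarrow> int^'d" where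
  "to_lattice r z = (\<chi> i. round (r * z $ i))"

text \<open>xi_T(z) = xi(r(T) z) / a(T), for a fixed realisation xi of the field.\<close>
definition xiT :: "(int^'d \<Rightarrow> real) \<Rightarrow> real \<Rightarrow> real \<Rightarrow> real^'d \<Rightarrow> real" where
  "xiT xi a r z = xi (to_lattice r z) / a"

definition admissible_path :: "real \<Rightarrow> real^'d \<Rightarrow> nat \<Rightarrow> (nat \<Rightarrow> real^'d) \<Rightarrow> bool" where
  "admissible_path r z n y \<longleftrightarrow> (\<forall>j\<le>n. y j \<in> LT r) \<and> y 0 = z \<and> y n = 0"

definition path_cost :: "real \<Rightarrow> (real^'d \<Rightarrow> real) \<Rightarrow> nat \<Rightarrow> (nat \<Rightarrow> real^'d) \<Rightarrow> real" where
  "path_cost q xt n y = (\<Sum>j=1..n. q * l1norm (y (j - 1) - y j) / xt (y j))"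

definition hT :: "real \<Rightarrow> real \<Rightarrow> (int^'d \<Rightarrow> real) \<Rightarrow> real^'d \<Rightarrow> real" where
  "hT \<alpha> T xi z =
    (let q = qexp \<alpha> TYPE('d); a = aT q T; r = rT q T in
     Inf {path_cost q (xiT xi a r) n y | n y. admissible_path r z n y})"

end

theory Submission
  imports Defs "HOL-Real_Asymp.Real_Asymp"
begin

text \<open>
  Call a realisation good if \<open>\<xi> > 1\<close> everywhere and \<open>\<xi>(x) \<le> N (1 + |x|)\<^sup>\<beta>\<close> for some
  \<open>\<beta> < 1\<close>. A union bound over the dyadic cubes \<open>[-2\<^sup>m, 2\<^sup>m]\<^sup>d\<close> and Borel--Cantelli show
  that almost every realisation is good once \<open>\<alpha>\<beta> > d\<close>.
  For a good realisation, a path that reaches \<open>\<ell>\<^sup>1\<close>-distance \<open>\<rho>\<close> from the origin must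
  travel \<open>\<rho>\<close> back to it, so it costs at least \<open>q\<rho> / sup\<^bsub>|w|\<le>\<rho>\<^esub> \<xi>\<^sub>T(w)\<close>, which tends to
  infinity with \<open>\<rho>\<close>. Hence paths costing no more than the direct jump \<open>z \<rightarrow> 0\<close> stay in a
  finite part of \<open>L\<^sub>T\<close>. Erasing loops does not increase the cost, so the infimum is a
  minimum over the finitely many loop-free paths in that finite set.
\<close>

lemma l1norm_nonneg: "0 \<le> l1norm x"
  unfolding l1norm_def by (simp add: sum_nonneg)

lemma l1norm_triangle: "l1norm (a - c) \<le> l1norm (a - b) + l1norm (b - c)"
proof -
  have "l1norm (a - c) = (\<Sum>i\<in>UNIV. \<bar>(a - b) $ i + (b - c) $ i\<bar>)"
    unfolding l1norm_def by (intro sum.cong) auto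
  also have "\<dots> \<le> (\<Sum>i\<in>UNIV. \<bar>(a - b) $ i\<bar> + \<bar>(b - c) $ i\<bar>)"
    by (intro sum_mono abs_triangle_ineq)
  finally show ?thesis unfolding l1norm_def by (simp add: sum.distrib)
qed

lemma abs_component_le_l1norm: "\<bar>x $ i\<bar> \<le> l1norm x"
  unfolding l1norm_def by (rule member_le_sum) auto

lemma l1norm_le_path_length:
  assumes "k \<le> n"
  shows "l1norm (y k - y n) \<le> (\<Sum>j=Suc k..n. l1norm (y (j - 1) - y j))"
  using assms
proof (induction n)
  case 0
  then show ?case by (simp add: l1norm_def)
next
  case (Suc n)
  show ?case
  proof (cases "k = Suc n")
    case True
    then show ?thesis by (simp add: l1norm_def)
  next
    case False
    with Suc.prems have "k \<le> n" by simp
    have "l1norm (y k - y (Suc n)) \<le> l1norm (y k - y n) + l1norm (y n - y (Suc n))"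
      by (rule l1norm_triangle)
    also have "\<dots> \<le> (\<Sum>j=Suc k..n. l1norm (y (j - 1) - y j)) + l1norm (y n - y (Suc n))"
      using Suc.IH[OF \<open>k \<le> n\<close>] by simp
    also have "\<dots> = (\<Sum>j=Suc k..Suc n. l1norm (y (j - 1) - y j))"
      using \<open>k \<le> n\<close> by (simp add: sum.nat_ivl_Suc')
    finally show ?thesis .
  qed
qed

lemma zero_in_LT: "0 \<in> LT r"
  unfolding LT_def by simp

lemma LT_component_eq_round:
  assumes "w \<in> LT r"
  shows "r * w $ i = real_of_int (round (r * w $ i))"
proof -
  have "r * w $ i \<in> \<int>" using assms unfolding LT_def by auto
  then show ?thesis by (auto elim!: Ints_cases)
qed

lemma admissible_path_direct:
  assumes "z \<in> LT r"
  shows "admissible_path r z 1 (\<lambda>j. if j = 0 then z else 0)"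
  using assms zero_in_LT unfolding admissible_path_def by auto

lemma admissible_path_shortcut:
  assumes adm: "admissible_path r z n y" and ik: "i < k" "k \<le> n" "y i = y k"
    and xt: "\<And>w. w \<in> LT r \<Longrightarrow> 0 \<le> xt w" and q: "0 \<le> q"
  shows "\<exists>n' y'. n' < n \<and> admissible_path r z n' y' \<and> path_cost q xt n' y' \<le> path_cost q xt n y"
proof -
  obtain l where l: "k = i + Suc l"
    using ik(1) less_iff_Suc_add by auto
  obtain p where p: "n = k + p"
    using ik(2) le_Suc_ex by blast
  define y' where "y' j = (if j \<le> i then y j else y (j + Suc l))" for j
  define t where "t j = q * l1norm (y (j - 1) - y j) / xt (y j)" for j
  have y_LT: "y j \<in> LT r" if "j \<le> n" for j
    using adm that unfolding admissible_path_def by auto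
  have adm': "admissible_path r z (i + p) y'"
    using adm ik unfolding admissible_path_def y'_def l p
    by (auto simp: add.commute add.left_commute)
  define t' where "t' j = q * l1norm (y' (j - 1) - y' j) / xt (y' j)" for j
  have shift: "y' (j - 1) = y (j + Suc l - 1)" if "i < j" for j
    using that ik(3) unfolding y'_def l by (cases "j = Suc i") auto
  have "path_cost q xt (i + p) y' = (\<Sum>j=1..i. t' j) + (\<Sum>j=i+1..i+p. t' j)"
    unfolding path_cost_def t'_def by (rule sum.ub_add_nat) simp
  also have "(\<Sum>j=1..i. t' j) = (\<Sum>j=1..i. t j)"
    by (intro sum.cong) (auto simp: t'_def t_def y'_def)
  also have "(\<Sum>j=i+1..i+p. t' j) = (\<Sum>j=i+1..i+p. t (j + Suc l))"
    using shift by (intro sum.cong) (auto simp: t'_def t_def y'_def)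
  also have "(\<Sum>j=i+1..i+p. t (j + Suc l)) = (\<Sum>j=k+1..k+p. t j)"
    unfolding l by (subst sum.shift_bounds_cl_nat_ivl[symmetric]) (simp add: algebra_simps)
  also have "(\<Sum>j=1..i. t j) \<le> (\<Sum>j=1..i. t j) + (\<Sum>j=i+1..k. t j)"
    using y_LT xt q ik by (auto simp: t_def intro!: sum_nonneg divide_nonneg_nonneg mult_nonneg_nonneg l1norm_nonneg)
  also have "\<dots> + (\<Sum>j=k+1..k+p. t j) = path_cost q xt n y"
  proof -
    have "(\<Sum>j=1..i. t j) + (\<Sum>j=i+1..k. t j) = (\<Sum>j=1..k. t j)"
      unfolding l using sum.ub_add_nat[of 1 i t "Suc l"] by simp
    moreover have "path_cost q xt n y = (\<Sum>j=1..k. t j) + (\<Sum>j=k+1..k+p. t j)"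
      unfolding path_cost_def t_def p using sum.ub_add_nat[of 1 k _ p] by simp
    ultimately show ?thesis by simp
  qed
  finally show ?thesis
    using adm' p l by (intro exI[of _ "i + p"] exI[of _ y']) auto
qed

lemma admissible_path_loop_free:
  assumes "admissible_path r z n y"
    and xt: "\<And>w. w \<in> LT r \<Longrightarrow> 0 \<le> xt w" and q: "0 \<le> q"
  shows "\<exists>n' y'. admissible_path r z n' y' \<and> inj_on y' {0..n'} \<and>
           path_cost q xt n' y' \<le> path_cost q xt n y"
  using assms(1)
proof (induction n arbitrary: y rule: less_induct)
  case (less n)
  show ?case
  proof (cases "inj_on y {0..n}")
    case True
    with less.prems show ?thesis by blast
  next
    case False
    then obtain a b where "a \<le> n" "b \<le> n" "a \<noteq> b" "y a = y b"
      unfolding inj_on_def by auto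
    then obtain i k where ik: "i < k" "k \<le> n" "y i = y k"
      by (metis linorder_neqE_nat)
    obtain n' y' where "n' < n" and adm': "admissible_path r z n' y'"
      and le: "path_cost q xt n' y' \<le> path_cost q xt n y"
      using admissible_path_shortcut[where xt=xt, OF less.prems ik xt q] by blast
    obtain n'' y'' where "admissible_path r z n'' y''" "inj_on y'' {0..n''}"
      and "path_cost q xt n'' y'' \<le> path_cost q xt n' y'"
      using less.IH[OF \<open>n' < n\<close> adm'] by blast
    with le show ?thesis by (blast intro: order_trans)
  qed
qed

lemma path_cost_ge_norm:
  assumes adm: "admissible_path r z n y" and q: "0 \<le> q"
    and pos: "\<And>w. w \<in> LT r \<Longrightarrow> 0 < xt w"
    and env: "\<And>w. w \<in> LT r \<Longrightarrow> l1norm w \<le> \<rho> \<Longrightarrow> xt w \<le> g"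
    and bounded: "\<And>j. j \<le> n \<Longrightarrow> l1norm (y j) \<le> \<rho>"
    and "k \<le> n"
  shows "q * l1norm (y k) / g \<le> path_cost q xt n y"
proof -
  have y_LT: "y j \<in> LT r" if "j \<le> n" for j
    using adm that unfolding admissible_path_def by auto
  have xt_le: "0 < xt (y j) \<and> xt (y j) \<le> g" if "j \<le> n" for j
    using pos env y_LT bounded that by blast
  then have g: "0 < g" by force
  have "l1norm (y k) = l1norm (y k - y n)"
    using adm unfolding admissible_path_def by simp
  also have "\<dots> \<le> (\<Sum>j=Suc k..n. l1norm (y (j - 1) - y j))"
    using \<open>k \<le> n\<close> by (rule l1norm_le_path_length)
  also have "\<dots> \<le> (\<Sum>j=1..n. l1norm (y (j - 1) - y j))"
    by (intro sum_mono2) (auto simp: l1norm_nonneg)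
  finally have "q * l1norm (y k) / g \<le> q * (\<Sum>j=1..n. l1norm (y (j - 1) - y j)) / g"
    using q g by (intro divide_right_mono mult_left_mono) auto
  also have "\<dots> = (\<Sum>j=1..n. q * l1norm (y (j - 1) - y j) / g)"
    by (simp add: sum_distrib_left sum_divide_distrib)
  also have "\<dots> \<le> path_cost q xt n y"
    unfolding path_cost_def using xt_le q g
    by (intro sum_mono divide_left_mono mult_nonneg_nonneg mult_pos_pos l1norm_nonneg) auto
  finally show ?thesis .
qed

definition int_cube :: "int \<Rightarrow> (int^'d) set" where
  "int_cube K = {x. \<forall>i. \<bar>x $ i\<bar> \<le> K}"

lemma int_cube_eq_image_PiE: "int_cube K = vec_lambda ` (\<Pi>\<^sub>E i\<in>UNIV. {-K..K})"
proof -
  have "x \<in> vec_lambda ` (\<Pi>\<^sub>E i\<in>UNIV. {-K..K})" if "x \<in> int_cube K" for x :: "int^'d"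
    using that by (intro image_eqI[of _ _ "vec_nth x"]) (auto simp: int_cube_def abs_le_iff minus_le_iff)
  then show ?thesis by (auto simp: int_cube_def abs_le_iff PiE_iff minus_le_iff)
qed

lemma finite_int_cube: "finite (int_cube K)"
  unfolding int_cube_eq_image_PiE by (intro finite_imageI finite_PiE) auto

lemma card_int_cube: "card (int_cube K :: (int^'d) set) = nat (2 * K + 1) ^ CARD('d)"
proof -
  have "inj_on vec_lambda (\<Pi>\<^sub>E i\<in>(UNIV::'d set). {-K..K})"
    by (rule inj_onI) (metis vec_lambda_inverse UNIV_I)
  then show ?thesis
    unfolding int_cube_eq_image_PiE by (simp add: card_image card_PiE)
qed

lemma abs_to_lattice_le:
  assumes "w \<in> LT r" "r \<ge> 0" "l1norm w \<le> \<rho>"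
  shows "real_of_int \<bar>to_lattice r w $ i\<bar> \<le> r * \<rho>"
proof -
  have "real_of_int \<bar>to_lattice r w $ i\<bar> = \<bar>r * w $ i\<bar>"
    using LT_component_eq_round[OF assms(1), of i] by (simp add: to_lattice_def)
  also have "\<dots> \<le> r * \<rho>"
    using assms abs_component_le_l1norm[of w i] by (simp add: abs_mult mult_left_mono)
  finally show ?thesis .
qed

lemma finite_LT_l1ball:
  assumes "r > 0"
  shows "finite {w :: real^'d. w \<in> LT r \<and> l1norm w \<le> \<rho>}"
proof (rule finite_imageD)
  let ?S = "{w :: real^'d. w \<in> LT r \<and> l1norm w \<le> \<rho>}"
  show "inj_on (to_lattice r) ?S"
  proof (rule inj_onI)
    fix v w assume "v \<in> ?S" "w \<in> ?S" "to_lattice r v = to_lattice r w"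
    then have "r * v $ i = r * w $ i" for i
      using LT_component_eq_round[of v r i] LT_component_eq_round[of w r i]
      by (simp add: to_lattice_def vec_eq_iff)
    with assms show "v = w" by (simp add: vec_eq_iff)
  qed
  have "to_lattice r w \<in> int_cube \<lceil>r * \<rho>\<rceil>" if "w \<in> ?S" for w
  proof -
    have "real_of_int \<bar>to_lattice r w $ i\<bar> \<le> r * \<rho>" for i
      using that assms by (intro abs_to_lattice_le) auto
    then have "real_of_int \<bar>to_lattice r w $ i\<bar> \<le> real_of_int \<lceil>r * \<rho>\<rceil>" for i
      using le_of_int_ceiling order_trans by blast
    then show ?thesis
      unfolding int_cube_def of_int_le_iff by blast
  qed
  then show "finite (to_lattice r ` ?S)"
    by (intro finite_subset[OF _ finite_int_cube]) auto
qed

lemma finite_loop_free_path_costs: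
  assumes "finite F"
  shows "finite {path_cost q xt n y | n y. inj_on y {0..n} \<and> (\<forall>j\<le>n. y j \<in> F)}"
proof -
  let ?paths = "SIGMA n:{..card F}. \<Pi>\<^sub>E j\<in>{0..n}. F"
  have "{path_cost q xt n y | n y. inj_on y {0..n} \<and> (\<forall>j\<le>n. y j \<in> F)}
      \<subseteq> (\<lambda>(n, y). path_cost q xt n y) ` ?paths"
  proof clarify
    fix n :: nat and y :: "nat \<Rightarrow> real^'a"
    assume inj: "inj_on y {0..n}"
      and F: "\<forall>j\<le>n. y j \<in> F"
    have "Suc n = card (y ` {0..n})" using inj by (simp add: card_image)
    also have "\<dots> \<le> card F" using F assms by (intro card_mono) auto
    finally have "n \<le> card F" by simp
    moreover have "path_cost q xt n y = path_cost q xt n (restrict y {0..n})"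
      unfolding path_cost_def by (intro sum.cong) auto
    ultimately show "path_cost q xt n y \<in> (\<lambda>(n, y). path_cost q xt n y) ` ?paths"
      using F by (intro image_eqI[of _ _ "(n, restrict y {0..n})"]) auto
  qed
  moreover have "finite ?paths"
    using assms by (intro finite_SigmaI finite_PiE) auto
  ultimately show ?thesis by (meson finite_imageI finite_subset)
qed

lemma cInf_mem_if_finite_dominating:
  fixes P :: "'a::conditionally_complete_linorder set"
  assumes "finite Q" "Q \<subseteq> P" "Q \<noteq> {}" and dominating: "\<And>p. p \<in> P \<Longrightarrow> \<exists>c\<in>Q. c \<le> p"
  shows "Inf P \<in> Q"
proof -
  have "Inf P = Min Q"
  proof (rule cInf_eq_minimum)
    show "Min Q \<in> P" using assms Min_in by blast
    show "Min Q \<le> p" if "p \<in> P" for p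
      using dominating[OF that] \<open>finite Q\<close> by (meson Min_le order_trans)
  qed
  then show ?thesis using assms Min_in by simp
qed

lemma cheap_admissible_path_bounded:
  assumes adm: "admissible_path r z n y" and q: "0 \<le> q"
    and pos: "\<And>w. w \<in> LT r \<Longrightarrow> 0 < xt w"
    and env: "\<And>w \<rho>. w \<in> LT r \<Longrightarrow> l1norm w \<le> \<rho> \<Longrightarrow> xt w \<le> g \<rho>"
    and cost: "path_cost q xt n y \<le> B"
    and \<rho>0: "\<And>\<rho>. \<rho> \<ge> \<rho>0 \<Longrightarrow> B < q * \<rho> / g \<rho>"
    and "j \<le> n"
  shows "l1norm (y j) < \<rho>0"
proof -
  define \<rho> where "\<rho> = Max ((\<lambda>j. l1norm (y j)) ` {0..n})"
  have "\<rho> \<in> (\<lambda>j. l1norm (y j)) ` {0..n}"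
    unfolding \<rho>_def by (intro Max_in) auto
  then obtain k where k: "k \<le> n" "l1norm (y k) = \<rho>" by auto
  have bounded: "l1norm (y j) \<le> \<rho>" if "j \<le> n" for j
    unfolding \<rho>_def using that by (intro Max_ge) auto
  have "q * \<rho> / g \<rho> \<le> B"
    using path_cost_ge_norm[where xt=xt and g="g \<rho>" and \<rho>=\<rho>, OF adm q pos env bounded k(1)] k(2) cost
    by simp
  then have "\<rho> < \<rho>0" using \<rho>0[of \<rho>] by linarith
  with bounded[OF \<open>j \<le> n\<close>] show ?thesis by simp
qed

lemma cheap_admissible_path_loop_free_bounded:
  assumes adm: "admissible_path r z n y" and q: "0 \<le> q"
    and pos: "\<And>w. w \<in> LT r \<Longrightarrow> 0 < xt w"
    and env: "\<And>w \<rho>. w \<in> LT r \<Longrightarrow> l1norm w \<le> \<rho> \<Longrightarrow> xt w \<le> g \<rho>"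
    and cost: "path_cost q xt n y \<le> B"
    and \<rho>0: "\<And>\<rho>. \<rho> \<ge> \<rho>0 \<Longrightarrow> B < q * \<rho> / g \<rho>"
  shows "\<exists>n' y'. admissible_path r z n' y' \<and> inj_on y' {0..n'} \<and> (\<forall>j\<le>n'. l1norm (y' j) \<le> \<rho>0) \<and>
           path_cost q xt n' y' \<le> path_cost q xt n y"
proof -
  have xt: "\<And>w. w \<in> LT r \<Longrightarrow> 0 \<le> xt w" using pos less_imp_le by blast
  obtain n' y' where adm': "admissible_path r z n' y'" "inj_on y' {0..n'}"
    and le: "path_cost q xt n' y' \<le> path_cost q xt n y"
    using admissible_path_loop_free[where xt=xt, OF adm xt q] by blast
  have "path_cost q xt n' y' \<le> B" using le cost by simp
  then have "l1norm (y' j) < \<rho>0" if "j \<le> n'" for j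
    using cheap_admissible_path_bounded[where xt=xt and g=g, OF adm'(1) q pos env _ \<rho>0 that] by blast
  with adm' le show ?thesis by (meson less_imp_le)
qed

lemma path_cost_Inf_attained:
  fixes xt :: "real^'d \<Rightarrow> real" and g :: "real \<Rightarrow> real"
  assumes r: "r > 0" and q: "q > 0" and z: "z \<in> LT r"
    and pos: "\<And>w. w \<in> LT r \<Longrightarrow> 0 < xt w"
    and env: "\<And>w \<rho>. w \<in> LT r \<Longrightarrow> l1norm w \<le> \<rho> \<Longrightarrow> xt w \<le> g \<rho>"
    and lim: "filterlim (\<lambda>\<rho>. q * \<rho> / g \<rho>) at_top at_top"
  shows "\<exists>n y. admissible_path r z n y \<and>
           path_cost q xt n y = Inf {path_cost q xt n y | n y. admissible_path r z n y}"
proof -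
  define P where "P = {path_cost q xt n y | n y. admissible_path r z n y}"
  define B where "B = path_cost q xt 1 (\<lambda>j. if j = 0 then z else 0)"
  obtain \<rho>0 where \<rho>0: "\<And>\<rho>. \<rho> \<ge> \<rho>0 \<Longrightarrow> B < q * \<rho> / g \<rho>"
    using lim by (auto simp: filterlim_at_top_dense eventually_at_top_linorder)
  define Q where "Q = {path_cost q xt n y | n y. admissible_path r z n y \<and> inj_on y {0..n} \<and>
                                              (\<forall>j\<le>n. l1norm (y j) \<le> \<rho>0)}"
  have "finite Q"
    unfolding Q_def
    by (rule finite_subset[OF _ finite_loop_free_path_costs[OF finite_LT_l1ball[OF r]]])
      (auto simp: admissible_path_def)
  have below_Q: "\<exists>c\<in>Q. c \<le> path_cost q xt n y"
    if "admissible_path r z n y" "path_cost q xt n y \<le> B" for n y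
    using cheap_admissible_path_loop_free_bounded[where xt=xt and g=g, OF that(1) less_imp_le[OF q] pos env that(2) \<rho>0]
    unfolding Q_def by blast
  have "admissible_path r z 1 (\<lambda>j. if j = 0 then z else 0)"
    using z by (rule admissible_path_direct)
  then obtain c0 where "c0 \<in> Q" "c0 \<le> B"
    using below_Q unfolding B_def by blast
  have "Inf P \<in> Q"
  proof (rule cInf_mem_if_finite_dominating)
    show "finite Q" by fact
    show "Q \<subseteq> P" unfolding P_def Q_def by blast
    show "Q \<noteq> {}" using \<open>c0 \<in> Q\<close> by blast
    show "\<exists>c\<in>Q. c \<le> p" if "p \<in> P" for p
    proof (cases "p \<le> B")
      case True
      with that below_Q show ?thesis unfolding P_def by blast
    next
      case False
      with \<open>c0 \<in> Q\<close> \<open>c0 \<le> B\<close> show ?thesis by (intro bexI[of _ c0]) auto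
    qed
  qed
  then obtain n y where "Inf P = path_cost q xt n y" "admissible_path r z n y"
    unfolding Q_def mem_Collect_eq by blast
  then show ?thesis
    unfolding P_def by metis
qed

lemma power2_bracket:
  fixes u :: real
  assumes "u \<ge> 1"
  shows "\<exists>m::nat. u \<le> 2 ^ m \<and> 2 ^ m \<le> 2 * u"
proof -
  define m where "m = nat \<lceil>log 2 u\<rceil>"
  have log: "0 \<le> log 2 u" using assms by simp
  have "u = 2 powr log 2 u" using assms by simp
  also have "\<dots> \<le> 2 powr real m" unfolding m_def using log by (intro powr_mono) linarith+
  finally have "u \<le> 2 ^ m" by (simp add: powr_realpow)
  moreover have "2 powr real m \<le> 2 powr (log 2 u + 1)"
    unfolding m_def using log by (intro powr_mono) linarith+
  then have "2 ^ m \<le> 2 * u" using assms by (simp add: powr_add powr_realpow)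
  ultimately show ?thesis by blast
qed

lemma growth_bound_of_dyadic_bound:
  fixes f :: "int^'d \<Rightarrow> real"
  assumes ev: "eventually (\<lambda>m. \<forall>x\<in>int_cube (2 ^ m). f x \<le> 2 powr (real m * \<beta>)) sequentially"
    and "\<beta> \<ge> 0"
  shows "\<exists>N>0. \<forall>x K. (\<forall>i. real_of_int \<bar>x $ i\<bar> \<le> K) \<longrightarrow> f x \<le> N * (1 + K) powr \<beta>"
proof -
  obtain m0 where m0: "\<And>m x. m \<ge> m0 \<Longrightarrow> x \<in> int_cube (2 ^ m) \<Longrightarrow> f x \<le> 2 powr (real m * \<beta>)"
    using ev unfolding eventually_sequentially by blast
  define N where "N = max (Max (f ` int_cube (2 ^ m0))) (2 powr \<beta>)"
  have "N > 0" unfolding N_def by (simp add: less_max_iff_disj)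
  moreover have "f x \<le> N * (1 + K) powr \<beta>" if x: "\<forall>i. real_of_int \<bar>x $ i\<bar> \<le> K" for x K
  proof -
    have "K \<ge> 0" using x by (meson abs_ge_zero of_int_0_le_iff order_trans)
    obtain m where upper: "1 + K \<le> 2 ^ m" and lower: "2 ^ m \<le> 2 * (1 + K)"
      using power2_bracket[of "1 + K"] \<open>K \<ge> 0\<close> by auto
    have "real_of_int \<bar>x $ i\<bar> \<le> real_of_int (2 ^ m)" for i using x[rule_format, of i] upper by simp
    then have cube: "x \<in> int_cube (2 ^ m)" unfolding int_cube_def of_int_le_iff by blast
    have one: "1 \<le> (1 + K) powr \<beta>" using \<open>K \<ge> 0\<close> \<open>\<beta> \<ge> 0\<close> by (simp add: ge_one_powr_ge_zero)
    show ?thesis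
    proof (cases "m \<ge> m0")
      case True
      have "f x \<le> 2 powr (real m * \<beta>)" using m0[OF True cube] .
      also have "\<dots> = (2 ^ m) powr \<beta>" by (simp add: powr_powr flip: powr_realpow)
      also have "\<dots> \<le> (2 * (1 + K)) powr \<beta>" using lower \<open>\<beta> \<ge> 0\<close> by (intro powr_mono2) auto
      also have "\<dots> = 2 powr \<beta> * (1 + K) powr \<beta>" using \<open>K \<ge> 0\<close> by (subst powr_mult) auto
      also have "\<dots> \<le> N * (1 + K) powr \<beta>" unfolding N_def by (intro mult_right_mono) auto
      finally show ?thesis .
    next
      case False
      have "int_cube (2 ^ m) \<subseteq> (int_cube (2 ^ m0) :: (int^'d) set)"
        using False unfolding int_cube_def by (auto intro: order_trans power_increasing)
      with cube have "f x \<le> Max (f ` int_cube (2 ^ m0))"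
        by (intro Max_ge finite_imageI finite_int_cube) auto
      also have "\<dots> \<le> N" unfolding N_def by simp
      also have "\<dots> \<le> N * (1 + K) powr \<beta>" using one \<open>N > 0\<close> by simp
      finally show ?thesis .
    qed
  qed
  ultimately show ?thesis by blast
qed

lemma xiT_Inf_path_cost_attained:
  fixes xi :: "int^'d \<Rightarrow> real" and z :: "real^'d"
  assumes r: "r > 0" and q: "q > 0" and a: "a > 0" and z: "z \<in> LT r"
    and \<beta>: "0 \<le> \<beta>" "\<beta> < 1" and N: "N > 0"
    and xi_pos: "\<And>x. 0 < xi x"
    and growth: "\<And>x K. (\<forall>i. real_of_int \<bar>x $ i\<bar> \<le> K) \<Longrightarrow> xi x \<le> N * (1 + K) powr \<beta>"
  shows "\<exists>n y. admissible_path r z n y \<and>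
     path_cost q (xiT xi a r) n y = Inf {path_cost q (xiT xi a r) n y | n y. admissible_path r z n y}"
proof (rule path_cost_Inf_attained[OF r q z])
  show "0 < xiT xi a r w" for w using xi_pos a by (simp add: xiT_def)
  show "xiT xi a r w \<le> N * (1 + r * \<rho>) powr \<beta> / a" if "w \<in> LT r" "l1norm w \<le> \<rho>" for w \<rho>
    using growth[of "to_lattice r w" "r * \<rho>"] abs_to_lattice_le[OF that(1) _ that(2)] r a
    by (simp add: xiT_def divide_right_mono)
  show "filterlim (\<lambda>\<rho>. q * \<rho> / (N * (1 + r * \<rho>) powr \<beta> / a)) at_top at_top"
    using q a N r \<beta> by real_asymp
qed

lemma measure_int_cube_exceed_le:
  fixes \<xi> :: "int^'d \<Rightarrow> 'w \<Rightarrow> real"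
  assumes meas: "\<And>x. \<xi> x \<in> borel_measurable M"
    and tail: "\<And>x. measure M {\<omega>\<in>space M. \<xi> x \<omega> > t} = t powr (-\<alpha>)"
  shows "measure M (\<Union>x\<in>int_cube K. {\<omega>\<in>space M. t < \<xi> x \<omega>})
           \<le> real (nat (2 * K + 1) ^ CARD('d)) * t powr (-\<alpha>)"
proof -
  have "measure M (\<Union>x\<in>int_cube K. {\<omega>\<in>space M. t < \<xi> x \<omega>})
      \<le> (\<Sum>x\<in>int_cube K. measure M {\<omega>\<in>space M. t < \<xi> x \<omega>})"
    using meas by (intro measure_UNION_le finite_int_cube) (simp add: borel_measurable_iff_greater)
  also have "\<dots> = real (nat (2 * K + 1) ^ CARD('d)) * t powr (-\<alpha>)"
    using tail by (simp add: card_int_cube)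
  finally show ?thesis .
qed

lemma AE_eventually_dyadic_bound:
  fixes \<xi> :: "int^'d \<Rightarrow> 'w \<Rightarrow> real"
  assumes "prob_space M" and meas: "\<And>x. \<xi> x \<in> borel_measurable M"
    and tail: "\<And>x t. t \<ge> 1 \<Longrightarrow> measure M {\<omega>\<in>space M. \<xi> x \<omega> > t} = t powr (-\<alpha>)"
    and \<beta>: "\<beta> > 0" and \<alpha>\<beta>: "\<alpha> * \<beta> > real CARD('d)"
  shows "AE \<omega> in M. eventually (\<lambda>m. \<forall>x\<in>int_cube (2 ^ m). \<xi> x \<omega> \<le> 2 powr (real m * \<beta>)) sequentially"
proof -
  interpret prob_space M by fact
  define A where "A m = (\<Union>x\<in>int_cube (2 ^ m). {\<omega>\<in>space M. 2 powr (real m * \<beta>) < \<xi> x \<omega>})" for m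
  define c where "c = 2 powr (real CARD('d) - \<alpha> * \<beta>)"
  have c: "0 < c" "c < 1" unfolding c_def using \<alpha>\<beta> by (auto intro: powr_less_one)
  have A_sets: "A m \<in> sets M" for m
    unfolding A_def using meas by (intro sets.finite_UN finite_int_cube) (simp add: borel_measurable_iff_greater)
  have "measure M (A m) \<le> 3 ^ CARD('d) * c ^ m" for m
  proof -
    have t: "1 \<le> 2 powr (real m * \<beta>)" using \<beta> by (intro ge_one_powr_ge_zero) auto
    have "real (nat (2 * 2 ^ m + 1) ^ CARD('d)) = (2 * 2 ^ m + 1) ^ CARD('d)"
      by simp
    also have "\<dots> \<le> (3 * 2 ^ m) ^ CARD('d)"
      by (intro power_mono) auto
    finally have card: "real (nat (2 * 2 ^ m + 1) ^ CARD('d)) \<le> (3 * 2 ^ m) ^ CARD('d)" .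
    then have "measure M (A m) \<le> (3 * 2 ^ m) ^ CARD('d) * (2 powr (real m * \<beta>)) powr (-\<alpha>)"
      using measure_int_cube_exceed_le[where \<xi>=\<xi> and K="2 ^ m", OF meas tail[OF t]]
      unfolding A_def by (smt (verit) card mult_right_mono powr_ge_zero)
    also have "\<dots> = 3 ^ CARD('d) * (2 powr (real m * real CARD('d)) * 2 powr (- (real m * \<alpha> * \<beta>)))"
      by (simp add: power_mult_distrib powr_powr powr_power mult_ac flip: powr_realpow)
    also have "\<dots> = 3 ^ CARD('d) * c ^ m"
      unfolding c_def by (simp add: powr_power powr_add[symmetric] algebra_simps)
    finally show ?thesis .
  qed
  then have "summable (\<lambda>m. measure M (A m))"
    using c by (intro summable_comparison_test[OF _ summable_mult[OF summable_geometric]]) auto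
  then have "AE \<omega> in M. eventually (\<lambda>m. \<omega> \<in> space M - A m) sequentially"
    using A_sets by (intro borel_cantelli_AE1) (auto simp: emeasure_eq_measure)
  then show ?thesis
    by eventually_elim (auto elim!: eventually_mono simp: A_def not_less)
qed

lemma AE_growth_bound:
  fixes \<xi> :: "int^'d \<Rightarrow> 'w \<Rightarrow> real"
  assumes "prob_space M" and "\<And>x. \<xi> x \<in> borel_measurable M"
    and "\<And>x t. t \<ge> 1 \<Longrightarrow> measure M {\<omega>\<in>space M. \<xi> x \<omega> > t} = t powr (-\<alpha>)"
    and "\<beta> > 0" and "\<alpha> * \<beta> > real CARD('d)"
  shows "AE \<omega> in M. \<exists>N>0. \<forall>x K. (\<forall>i. real_of_int \<bar>x $ i\<bar> \<le> K) \<longrightarrow> \<xi> x \<omega> \<le> N * (1 + K) powr \<beta>"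
proof -
  have "AE \<omega> in M. eventually (\<lambda>m. \<forall>x\<in>int_cube (2 ^ m). \<xi> x \<omega> \<le> 2 powr (real m * \<beta>)) sequentially"
    by (rule AE_eventually_dyadic_bound) (use assms in auto)
  then show ?thesis
    by eventually_elim (rule growth_bound_of_dyadic_bound, use \<open>\<beta> > 0\<close> in auto)
qed

lemma AE_all_exceed_one:
  fixes \<xi> :: "int^'d \<Rightarrow> 'w \<Rightarrow> real"
  assumes "prob_space M"
    and tail: "\<And>x. measure M {\<omega>\<in>space M. \<xi> x \<omega> > 1} = 1"
  shows "AE \<omega> in M. \<forall>x. 1 < \<xi> x \<omega>"
proof -
  interpret prob_space M by fact
  have "AE \<omega> in M. \<omega> \<in> {\<omega>\<in>space M. \<xi> x \<omega> > 1}" for x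
    using tail by (intro AE_prob_1) simp
  then show ?thesis
    by (subst AE_all_countable) (auto elim: AE_mp)
qed

theorem lemma3p1:
  fixes M :: "'w measure" and \<xi> :: "int^'d \<Rightarrow> 'w \<Rightarrow> real"
    and \<alpha> T :: real and z :: "real^'d"
  assumes M: "prob_space M"
    and meas: "\<And>x. \<xi> x \<in> borel_measurable M"
    and "prob_space.indep_vars M (\<lambda>_. borel) \<xi> UNIV"
    and tail: "\<And>x t. t \<ge> 1 \<Longrightarrow> measure M {\<omega>\<in>space M. \<xi> x \<omega> > t} = t powr (-\<alpha>)"
    and \<alpha>: "\<alpha> > real CARD('d)"
    and T: "T > 1"
    and z: "z \<in> LT (rT (qexp \<alpha> TYPE('d)) T)"
  shows "AE \<omega> in M. \<exists>n y.
           admissible_path (rT (qexp \<alpha> TYPE('d)) T) z n y \<and>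
           path_cost (qexp \<alpha> TYPE('d))
             (xiT (\<lambda>x. \<xi> x \<omega>) (aT (qexp \<alpha> TYPE('d)) T) (rT (qexp \<alpha> TYPE('d)) T)) n y
           = hT \<alpha> T (\<lambda>x. \<xi> x \<omega>) z"
proof -
  define q where "q = qexp \<alpha> TYPE('d)"
  \<comment> \<open>any \<open>\<beta>\<close> strictly between \<open>d/\<alpha>\<close> and 1 would do\<close>
  define \<beta> where "\<beta> = (real CARD('d) / \<alpha> + 1) / 2"
  have "0 < real CARD('d)" by simp
  with \<alpha> have q: "q > 0" and \<beta>: "0 < \<beta>" "\<beta> < 1" "\<alpha> * \<beta> > real CARD('d)"
    by (auto simp: q_def qexp_def \<beta>_def field_simps)
  have r: "rT q T > 0" and a: "aT q T > 0"
    using T by (auto simp: rT_def aT_def)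
  have "AE \<omega> in M. \<exists>N>0. \<forall>x K. (\<forall>i. real_of_int \<bar>x $ i\<bar> \<le> K) \<longrightarrow> \<xi> x \<omega> \<le> N * (1 + K) powr \<beta>"
    by (rule AE_growth_bound) (use M meas tail \<beta> in auto)
  moreover have "AE \<omega> in M. \<forall>x. 1 < \<xi> x \<omega>"
    by (rule AE_all_exceed_one[OF M]) (simp add: tail)
  ultimately show ?thesis
  proof eventually_elim
    case (elim \<omega>)
    then obtain N where N: "N > 0"
      "\<And>x K. \<forall>i. real_of_int \<bar>x $ i\<bar> \<le> K \<Longrightarrow> \<xi> x \<omega> \<le> N * (1 + K) powr \<beta>"
      by blast
    have "\<exists>n y. admissible_path (rT q T) z n y \<and>
        path_cost q (xiT (\<lambda>x. \<xi> x \<omega>) (aT q T) (rT q T)) n y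
        = Inf {path_cost q (xiT (\<lambda>x. \<xi> x \<omega>) (aT q T) (rT q T)) n y | n y. admissible_path (rT q T) z n y}"
      using \<beta> N elim(2) by (intro xiT_Inf_path_cost_attained[where \<beta>=\<beta> and N=N, OF r q a z[folded q_def]]) (auto intro: less_trans)
    then show ?case
      unfolding hT_def Let_def q_def .
  qed
qed

end
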